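(* Let $f:\mathbb{R}^n\to\mathbb{R}$ be continuously differentiable and bounded below, let $s$ be an integer with $0<s<n$, and let $\{\mathbf{x}^k\}$ be the sequence generated by the partial sparse-simplex method. Then any accumulation point of $\{\mathbf{x}^k\}$ is a BF vector of the problem (P): minimize $f(\mathbf{x})$ subject to $\|\mathbf{x}\|_0\le s$.
   Context: $\|\mathbf{x}\|_0$ is the number of nonzero components, $C_s=\{\mathbf{x}:\|\mathbf{x}\|_0\le s\}$, $I_1(\mathbf{x})=\{i:x_i\neq0\}$, $I_0(\mathbf{x})=\{i:x_i=0\}$, $\mathbf{e}_i$ the $i$-th standard basis vector. Partial sparse-simplex method (all one-dimensional minima assumed attained): choose $\mathbf{x}^0\in C_s$. At step $k$: if $\|\mathbf{x}^k\|_0<s$, for each $i=1,\dots,n$ let $t_i\in\operatorname{argmin}_t f(\mathbf{x}^k+t\mathbf{e}_i)$, $f_i=\min_t f(\mathbf{x}^k+t\mathbf{e}_i)$, $i_k\in\operatorname{argmin}_i f_i$; if $f_{i_k}<f(\mathbf{x}^k)$ set $\mathbf{x}^{k+1}=\mathbf{x}^k+t_{i_k}\mathbf{e}_{i_k}$, else stop. If $\|\mathbf{x}^k\|_0=s$: for $i\in I_1(\mathbf{x}^k)$ let $f_i=\min_t f(\mathbf{x}^k+t\mathbf{e}_i)$; let $i_k^1\in\operatorname{argmin}\{f_i:i\in I_1(\mathbf{x}^k)\}$, $i_k^2\in\operatorname{argmax}\{|\nabla_i f(\mathbf{x}^k)|:i\in I_0(\mathbf{x}^k)\}$, $m_k\in\operatorname{argmin}\{|x_i^k|:i\in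 I_1(\mathbf{x}^k)\}$; let $D_k^1=\min_t f(\mathbf{x}^k+t\mathbf{e}_{i_k^1})$ with minimizer $T_k^1$, and $D_k^2=\min_t f(\mathbf{x}^k-x^k_{m_k}\mathbf{e}_{m_k}+t\mathbf{e}_{i_k^2})$ with minimizer $T_k^2$; if $D_k^1<D_k^2$ set $\mathbf{x}^{k+1}=\mathbf{x}^k+T_k^1\mathbf{e}_{i_k^1}$, else $\mathbf{x}^{k+1}=\mathbf{x}^k-x^k_{m_k}\mathbf{e}_{m_k}+T_k^2\mathbf{e}_{i_k^2}$. A vector $\mathbf{x}^*\in C_s$ is a basic feasible (BF) vector of (P) if: when $\|\mathbf{x}^*\|_0<s$, $\nabla f(\mathbf{x}^* )=0$; and when $\|\mathbf{x}^*\|_0=s$, $\nabla_i f(\mathbf{x}^* )=0$ for all $i\in I_1(\mathbf{x}^* )$. *)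

theory Defs
  imports "HOL-Analysis.Analysis"
begin

text \<open>Vectors in R^n are modelled as real^'n; the standard basis vector e_i is axis i 1.\<close>

definition l0norm :: "real^'n \<Rightarrow> nat" where
  "l0norm x = card {i. x $ i \<noteq> 0}"

definition Cs :: "nat \<Rightarrow> (real^'n) set" where
  "Cs s = {x. l0norm x \<le> s}"

definition I1 :: "real^'n \<Rightarrow> 'n set" where
  "I1 x = {i. x $ i \<noteq> 0}"

definition I0 :: "real^'n \<Rightarrow> 'n set" where
  "I0 x = {i. x $ i = 0}"

definition is_line_argmin :: "(real^'n \<Rightarrow> real) \<Rightarrow> real^'n \<Rightarrow> 'n \<Rightarrow> real \<Rightarrow> bool" where
  "is_line_argmin f y i t \<longleftrightarrow> (\<forall>u. f (y + t *\<^sub>R axis i 1) \<le> f (y + u *\<^sub>R axis i 1))"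

definition line_min :: "(real^'n \<Rightarrow> real) \<Rightarrow> real^'n \<Rightarrow> 'n \<Rightarrow> real" where
  "line_min f y i = (INF u. f (y + u *\<^sub>R axis i 1))"

text \<open>One step x -> x' of the partial sparse-simplex method; g is the gradient of f.
  If the method stops at x (case l0norm x < s and no improvement), the sequence is
  continued constantly, x' = x.\<close>
definition pss_step :: "(real^'n \<Rightarrow> real) \<Rightarrow> (real^'n \<Rightarrow> real^'n) \<Rightarrow> nat
    \<Rightarrow> real^'n \<Rightarrow> real^'n \<Rightarrow> bool" where
  "pss_step f g s x x' \<longleftrightarrow>
    (if l0norm x < s then
       (\<exists>t ik. (\<forall>i. is_line_argmin f x i (t i)) \<and>
          (\<forall>i. line_min f x ik \<le> line_min f x i) \<and>
          (if line_min f x ik < f x then x' = x + t ik *\<^sub>R axis ik 1 else x' = x))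
     else
       (\<exists>i1 i2 m T1 T2.
          i1 \<in> I1 x \<and> (\<forall>i\<in>I1 x. line_min f x i1 \<le> line_min f x i) \<and>
          i2 \<in> I0 x \<and> (\<forall>i\<in>I0 x. \<bar>g x $ i\<bar> \<le> \<bar>g x $ i2\<bar>) \<and>
          m \<in> I1 x \<and> (\<forall>i\<in>I1 x. \<bar>x $ m\<bar> \<le> \<bar>x $ i\<bar>) \<and>
          is_line_argmin f x i1 T1 \<and>
          is_line_argmin f (x - (x $ m) *\<^sub>R axis m 1) i2 T2 \<and>
          (let D1 = f (x + T1 *\<^sub>R axis i1 1);
               D2 = f (x - (x $ m) *\<^sub>R axis m 1 + T2 *\<^sub>R axis i2 1)
           in if D1 < D2 then x' = x + T1 *\<^sub>R axis i1 1
              else x' = x - (x $ m) *\<^sub>R axis m 1 + T2 *\<^sub>R axis i2 1)))"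

definition BF_vector :: "(real^'n \<Rightarrow> real^'n) \<Rightarrow> nat \<Rightarrow> real^'n \<Rightarrow> bool" where
  "BF_vector g s x \<longleftrightarrow> x \<in> Cs s \<and>
     (l0norm x < s \<longrightarrow> g x = 0) \<and>
     (l0norm x = s \<longrightarrow> (\<forall>i\<in>I1 x. g x $ i = 0))"

end

theory Submission
  imports Defs
begin

text \<open>Every step of the method is a best move among the coordinate lines through the current
  iterate (all lines if it is sparse, the lines along its support if it is full), or a best move
  after dropping its smallest entry. Since the values f(x^k) decrease, along a subsequence
  x^(r j) \<rightarrow> p both f(x^(r j)) and f(x^(r j + 1)) tend to f(p), and by continuity of f the
  inequality f(x^(r j + 1)) \<le> f(z_j + t e_i), for points z_j \<rightarrow> p, passes to the limit as
  f(p) \<le> f(p + t e_i), so \<nabla>_i f(p) = 0. If p is full, the support of x^(r j) eventually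
  equals that of p. If p is sparse but the x^(r j) are full, the dropped entry tends to 0, so the
  swap moves along a line through a point near p; an index c chosen infinitely often gives
  \<nabla>_c f(p) = 0, and c dominates all gradient entries off the support, which forces \<nabla> f(p) = 0.\<close>

section \<open>One step of the method\<close>

lemma line_min_eq_argmin:
  assumes "is_line_argmin f y i t"
  shows "line_min f y i = f (y + t *\<^sub>R axis i 1)"
  using assms unfolding line_min_def is_line_argmin_def
  by (intro cInf_eq_minimum) auto

lemma line_min_le:
  assumes "\<And>y i. \<exists>t. is_line_argmin f y i t"
  shows "line_min f y i \<le> f (y + u *\<^sub>R axis i 1)"
proof -
  obtain t where t: "is_line_argmin f y i t" using assms by blast
  show ?thesis using line_min_eq_argmin[OF t] t unfolding is_line_argmin_def by simp
qed

lemma l0norm_eq_card_I1: "l0norm y = card (I1 y)"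
  unfolding l0norm_def I1_def by simp

lemma I1_add_axis_subset: "I1 (y + c *\<^sub>R axis i 1) \<subseteq> insert i (I1 y)"
  unfolding I1_def by (auto simp: axis_def)

lemma I1_swap_subset: "I1 (y - (y $ m) *\<^sub>R axis m 1 + c *\<^sub>R axis i 1) \<subseteq> insert i (I1 y - {m})"
  unfolding I1_def by (auto simp: axis_def)

lemma card_le_Suc_if_subset_insert:
  fixes A :: "'n::finite set"
  assumes "A \<subseteq> insert i B"
  shows "card A \<le> Suc (card B)"
proof -
  have "card A \<le> card (insert i B)" using assms by (intro card_mono) auto
  then show ?thesis by (simp add: card_insert_if split: if_split_asm)
qed

lemma pss_step_sparse:
  fixes f :: "real^'n \<Rightarrow> real"
  assumes attained: "\<And>y i. \<exists>t. is_line_argmin f y i t"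
    and step: "pss_step f g s y y'" and sparse: "l0norm y < s"
  shows "l0norm y' \<le> s" and "f y' \<le> f (y + u *\<^sub>R axis i 1)"
proof -
  from step sparse obtain t ik where t: "\<forall>i. is_line_argmin f y i (t i)"
    and ik: "\<forall>i. line_min f y ik \<le> line_min f y i"
    and y': "if line_min f y ik < f y then y' = y + t ik *\<^sub>R axis ik 1 else y' = y"
    unfolding pss_step_def by auto
  have "f y' \<le> line_min f y ik"
    using y' line_min_eq_argmin[OF t[rule_format, of ik]] by (auto split: if_splits)
  then show "f y' \<le> f (y + u *\<^sub>R axis i 1)"
    using ik line_min_le[OF attained, of y i u] by (meson order_trans)
  show "l0norm y' \<le> s"
  proof (cases "line_min f y ik < f y")
    case True
    then have "card (I1 y') \<le> Suc (card (I1 y))"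
      using y' card_le_Suc_if_subset_insert[OF I1_add_axis_subset] by simp
    then show ?thesis using sparse by (simp add: l0norm_eq_card_I1)
  next
    case False
    then show ?thesis using y' sparse by simp
  qed
qed

lemma pss_step_full:
  fixes f :: "real^'n \<Rightarrow> real"
  assumes attained: "\<And>y i. \<exists>t. is_line_argmin f y i t"
    and step: "pss_step f g s y y'" and full: "l0norm y = s"
  obtains m c where "m \<in> I1 y" "\<forall>i\<in>I1 y. \<bar>y $ m\<bar> \<le> \<bar>y $ i\<bar>"
    and "c \<in> I0 y" "\<forall>i\<in>I0 y. \<bar>g y $ i\<bar> \<le> \<bar>g y $ c\<bar>"
    and "\<forall>t. f y' \<le> f (y - (y $ m) *\<^sub>R axis m 1 + t *\<^sub>R axis c 1)"
    and "\<forall>i\<in>I1 y. \<forall>u. f y' \<le> f (y + u *\<^sub>R axis i 1)"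
    and "f y' \<le> f y" and "l0norm y' \<le> s"
proof -
  from step full obtain i1 c m T1 T2 where
      i1: "i1 \<in> I1 y" "\<forall>i\<in>I1 y. line_min f y i1 \<le> line_min f y i"
    and c: "c \<in> I0 y" "\<forall>i\<in>I0 y. \<bar>g y $ i\<bar> \<le> \<bar>g y $ c\<bar>"
    and m: "m \<in> I1 y" "\<forall>i\<in>I1 y. \<bar>y $ m\<bar> \<le> \<bar>y $ i\<bar>"
    and T1: "is_line_argmin f y i1 T1"
    and T2: "is_line_argmin f (y - (y $ m) *\<^sub>R axis m 1) c T2"
    and y': "let D1 = f (y + T1 *\<^sub>R axis i1 1);
               D2 = f (y - (y $ m) *\<^sub>R axis m 1 + T2 *\<^sub>R axis c 1)
             in if D1 < D2 then y' = y + T1 *\<^sub>R axis i1 1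
                else y' = y - (y $ m) *\<^sub>R axis m 1 + T2 *\<^sub>R axis c 1"
    unfolding pss_step_def by auto
  define D1 where "D1 = f (y + T1 *\<^sub>R axis i1 1)"
  define D2 where "D2 = f (y - (y $ m) *\<^sub>R axis m 1 + T2 *\<^sub>R axis c 1)"
  have y'_cases: "y' = y + T1 *\<^sub>R axis i1 1 \<and> D1 < D2
      \<or> y' = y - (y $ m) *\<^sub>R axis m 1 + T2 *\<^sub>R axis c 1 \<and> \<not> D1 < D2"
    using y' unfolding D1_def D2_def Let_def by (auto split: if_splits)
  have fy': "f y' \<le> D1" "f y' \<le> D2"
    using y'_cases unfolding D1_def D2_def by auto
  have D1: "D1 = line_min f y i1" using line_min_eq_argmin[OF T1] D1_def by simp
  have along_support: "\<forall>i\<in>I1 y. \<forall>u. f y' \<le> f (y + u *\<^sub>R axis i 1)"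
    using fy' D1 i1(2) line_min_le[OF attained] by (meson order_trans)
  have "\<forall>t. f y' \<le> f (y - (y $ m) *\<^sub>R axis m 1 + t *\<^sub>R axis c 1)"
    using fy' T2 unfolding D2_def is_line_argmin_def by (meson order_trans)
  moreover have "f y' \<le> f y" using along_support i1(1) by (metis add.right_neutral scaleR_zero_left)
  moreover have "l0norm y' \<le> s"
    using y'_cases
  proof (elim disjE conjE)
    assume "y' = y + T1 *\<^sub>R axis i1 1"
    then have "I1 y' \<subseteq> I1 y" using I1_add_axis_subset[of y T1 i1] i1(1) by auto
    then show ?thesis using full by (metis card_mono finite l0norm_eq_card_I1)
  next
    assume "y' = y - (y $ m) *\<^sub>R axis m 1 + T2 *\<^sub>R axis c 1"
    then have "card (I1 y') \<le> Suc (card (I1 y - {m}))"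
      using card_le_Suc_if_subset_insert[OF I1_swap_subset] by simp
    also have "\<dots> = card (I1 y)" by (rule card_Suc_Diff1[OF finite m(1)])
    finally show ?thesis using full by (simp add: l0norm_eq_card_I1)
  qed
  ultimately show ?thesis using that m c along_support by blast
qed

lemma pss_step_full_along_support:
  fixes f :: "real^'n \<Rightarrow> real"
  assumes attained: "\<And>y i. \<exists>t. is_line_argmin f y i t"
    and step: "pss_step f g s y y'" and full: "l0norm y = s" and i: "i \<in> I1 y"
  shows "f y' \<le> f (y + u *\<^sub>R axis i 1)"
  by (rule pss_step_full[OF attained step full]) (use i in blast)

lemma pss_step_descent:
  fixes f :: "real^'n \<Rightarrow> real"
  assumes attained: "\<And>y i. \<exists>t. is_line_argmin f y i t"
    and step: "pss_step f g s y y'" and feasible: "l0norm y \<le> s"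
  shows "f y' \<le> f y \<and> l0norm y' \<le> s"
proof (cases "l0norm y < s")
  case True
  then show ?thesis
    using pss_step_sparse(1)[OF attained step True] pss_step_sparse(2)[OF attained step True, of 0]
    by simp
next
  case False
  with feasible have "l0norm y = s" by simp
  then show ?thesis by (rule pss_step_full[OF attained step]) blast
qed

section \<open>Limits along coordinate lines\<close>

lemma gradient_component_zero_if_line_min:
  fixes f :: "real^'n \<Rightarrow> real"
  assumes grad: "(f has_derivative (\<lambda>h. g \<bullet> h)) (at y)"
    and min: "\<forall>t. f y \<le> f (y + t *\<^sub>R axis i 1)"
  shows "g $ i = 0"
proof -
  have line: "((\<lambda>t::real. y + t *\<^sub>R axis i 1) has_derivative (\<lambda>h. h *\<^sub>R axis i 1)) (at 0)"
    by (auto intro!: derivative_eq_intros)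
  have "((\<lambda>t. f (y + t *\<^sub>R axis i 1)) has_derivative (\<lambda>h. g \<bullet> (h *\<^sub>R axis i 1))) (at 0)"
    using has_derivative_compose[OF line, of f "inner g"] grad by (simp add: o_def)
  moreover have "(\<lambda>h. g \<bullet> (h *\<^sub>R axis i 1)) = (\<lambda>h. h * (g $ i))"
    by (simp add: inner_axis mult.commute)
  ultimately have "((\<lambda>t. f (y + t *\<^sub>R axis i 1)) has_real_derivative (g $ i)) (at 0)"
    by (simp add: has_field_derivative_def mult.commute[of _ "g $ i"])
  then show ?thesis
    by (rule DERIV_local_min[where d=1]) (use min in auto)
qed

lemma le_line_value_if_frequently_near:
  fixes f :: "real^'n \<Rightarrow> real"
  assumes cont: "continuous_on UNIV f"
    and X: "X \<longlonglongrightarrow> p" and \<epsilon>: "\<epsilon> \<longlonglongrightarrow> 0" and fY: "(\<lambda>j. f (Y j)) \<longlonglongrightarrow> f p"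
    and near: "\<exists>\<^sub>F j in sequentially. \<exists>z. norm (z - X j) \<le> \<epsilon> j \<and> f (Y j) \<le> f (z + t *\<^sub>R axis i 1)"
  shows "f p \<le> f (p + t *\<^sub>R axis i 1)"
proof (rule ccontr)
  define q where "q = p + t *\<^sub>R axis i 1"
  define \<eta> where "\<eta> = (f p - f q) / 2"
  assume "\<not> f p \<le> f (p + t *\<^sub>R axis i 1)"
  then have \<eta>_pos: "\<eta> > 0" unfolding \<eta>_def q_def by simp
  obtain \<delta> where "\<delta> > 0" and \<delta>: "\<And>w. dist w q < \<delta> \<Longrightarrow> dist (f w) (f q) < \<eta>"
    using cont \<eta>_pos unfolding continuous_on_iff by blast
  have "\<forall>\<^sub>F j in sequentially. dist (X j) p < \<delta>/2" using X \<open>\<delta> > 0\<close> by (intro tendstoD) auto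
  moreover have "\<forall>\<^sub>F j in sequentially. dist (\<epsilon> j) 0 < \<delta>/2" using \<epsilon> \<open>\<delta> > 0\<close> by (intro tendstoD) auto
  moreover have "\<forall>\<^sub>F j in sequentially. dist (f (Y j)) (f p) < \<eta>" using fY \<eta>_pos by (intro tendstoD) auto
  ultimately have "\<forall>\<^sub>F j in sequentially.
      \<not> (\<exists>z. norm (z - X j) \<le> \<epsilon> j \<and> f (Y j) \<le> f (z + t *\<^sub>R axis i 1))"
  proof eventually_elim
    case (elim j)
    show ?case
    proof
      assume "\<exists>z. norm (z - X j) \<le> \<epsilon> j \<and> f (Y j) \<le> f (z + t *\<^sub>R axis i 1)"
      then obtain z where z: "norm (z - X j) \<le> \<epsilon> j" and fz: "f (Y j) \<le> f (z + t *\<^sub>R axis i 1)"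
        by blast
      have "dist (z + t *\<^sub>R axis i 1) q = norm (z - p)" unfolding q_def dist_norm by (simp add: algebra_simps)
      also have "\<dots> \<le> norm (z - X j) + norm (X j - p)" by (metis dist_norm dist_triangle)
      also have "\<dots> < \<delta>" using z elim by (simp add: dist_norm)
      finally have "dist (f (z + t *\<^sub>R axis i 1)) (f q) < \<eta>" by (rule \<delta>)
      then show False using fz elim(3) unfolding dist_real_def \<eta>_def by (simp add: abs_if split: if_splits)
    qed
  qed
  then show False using near unfolding frequently_def by simp
qed

lemma tendsto_le_frequently:
  fixes a b :: "nat \<Rightarrow> real"
  assumes "a \<longlonglongrightarrow> A" "b \<longlonglongrightarrow> B" "\<exists>\<^sub>F j in sequentially. a j \<le> b j"
  shows "A \<le> B"
proof (rule ccontr)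
  assume "\<not> A \<le> B"
  then have "(\<lambda>j. a j - b j) \<longlonglongrightarrow> A - B" "A - B > 0"
    using assms by (auto intro: tendsto_diff)
  then have "\<forall>\<^sub>F j in sequentially. a j - b j > 0" by (rule order_tendstoD)
  then have "\<forall>\<^sub>F j in sequentially. \<not> a j \<le> b j" by eventually_elim auto
  then show False using assms(3) unfolding frequently_def by simp
qed

lemma eventually_I1_subset:
  fixes X :: "nat \<Rightarrow> real^'n"
  assumes "X \<longlonglongrightarrow> p"
  shows "\<forall>\<^sub>F j in sequentially. I1 p \<subseteq> I1 (X j)"
proof -
  have "\<forall>\<^sub>F j in sequentially. p $ i \<noteq> 0 \<longrightarrow> X j $ i \<noteq> 0" for i
    using tendsto_imp_eventually_ne[OF tendsto_vec_nth[OF assms], of i 0]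
    by (cases "p $ i = 0") (auto elim: eventually_mono)
  then have "\<forall>\<^sub>F j in sequentially. \<forall>i. p $ i \<noteq> 0 \<longrightarrow> X j $ i \<noteq> 0"
    by (rule eventually_all_finite)
  then show ?thesis by eventually_elim (auto simp: I1_def)
qed

section \<open>Accumulation points of the method\<close>

locale pss_run =
  fixes f :: "real^'n \<Rightarrow> real" and g :: "real^'n \<Rightarrow> real^'n"
    and s :: nat and x :: "nat \<Rightarrow> real^'n"
  assumes grad: "\<And>y. (f has_derivative (\<lambda>h. g y \<bullet> h)) (at y)"
    and g_cont: "continuous_on UNIV g"
    and attained: "\<And>y i. \<exists>t. is_line_argmin f y i t"
    and init: "x 0 \<in> Cs s"
    and steps: "\<And>k. pss_step f g s (x k) (x (Suc k))"
begin

lemma f_cont: "continuous_on UNIV f"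
  by (intro continuous_at_imp_continuous_on ballI has_derivative_continuous[OF grad])

lemma l0norm_iterate_le: "l0norm (x k) \<le> s"
proof (induction k)
  case 0
  then show ?case using init by (simp add: Cs_def)
next
  case (Suc k)
  then show ?case using pss_step_descent[OF attained steps] by blast
qed

lemma f_iterate_Suc_le: "f (x (Suc k)) \<le> f (x k)"
  using pss_step_descent[OF attained steps l0norm_iterate_le] by blast

end

locale pss_accumulation = pss_run +
  fixes r :: "nat \<Rightarrow> nat" and p :: "real^'n"
  assumes r: "strict_mono r" and conv: "(x \<circ> r) \<longlonglongrightarrow> p"
begin

lemma subseq_tendsto: "(\<lambda>j. x (r j)) \<longlonglongrightarrow> p"
  using conv by (simp add: o_def)

lemma f_subseq_tendsto: "(\<lambda>j. f (x (r j))) \<longlonglongrightarrow> f p"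
  using f_cont subseq_tendsto by (rule continuous_on_tendsto_compose) auto

lemma g_subseq_tendsto: "(\<lambda>j. g (x (r j))) \<longlonglongrightarrow> g p"
  using g_cont subseq_tendsto by (rule continuous_on_tendsto_compose) auto

lemma f_subseq_Suc_tendsto: "(\<lambda>j. f (x (Suc (r j)))) \<longlonglongrightarrow> f p"
proof (rule tendsto_sandwich[OF _ _ LIMSEQ_Suc[OF f_subseq_tendsto] f_subseq_tendsto])
  have "Suc (r j) \<le> r (Suc j)" for j using r by (simp add: strict_mono_def Suc_leI)
  then show "\<forall>\<^sub>F j in sequentially. f (x (r (Suc j))) \<le> f (x (Suc (r j)))"
    using lift_Suc_antimono_le[of "\<lambda>k. f (x k)", OF f_iterate_Suc_le] by auto
  show "\<forall>\<^sub>F j in sequentially. f (x (Suc (r j))) \<le> f (x (r j))"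
    using f_iterate_Suc_le by auto
qed

lemma limit_in_Cs: "p \<in> Cs s"
proof -
  obtain j where "I1 p \<subseteq> I1 (x (r j))"
    using eventually_I1_subset[OF subseq_tendsto] by (auto simp: eventually_sequentially)
  then have "card (I1 p) \<le> card (I1 (x (r j)))" by (intro card_mono) auto
  then show ?thesis using l0norm_iterate_le[of "r j"] by (simp add: Cs_def l0norm_eq_card_I1)
qed

lemma gradient_component_zero_if_frequently_near:
  assumes \<epsilon>: "\<epsilon> \<longlonglongrightarrow> 0"
    and near: "\<And>t. \<exists>\<^sub>F j in sequentially.
      \<exists>z. norm (z - x (r j)) \<le> \<epsilon> j \<and> f (x (Suc (r j))) \<le> f (z + t *\<^sub>R axis i 1)"
  shows "g p $ i = 0"
  using grad
  by (rule gradient_component_zero_if_line_min)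
    (use le_line_value_if_frequently_near[OF f_cont subseq_tendsto \<epsilon> f_subseq_Suc_tendsto near]
      in blast)

lemma gradient_component_zero_if_frequently_optimal:
  assumes "\<exists>\<^sub>F j in sequentially. \<forall>t. f (x (Suc (r j))) \<le> f (x (r j) + t *\<^sub>R axis i 1)"
  shows "g p $ i = 0"
proof (rule gradient_component_zero_if_frequently_near[OF tendsto_const])
  show "\<exists>\<^sub>F j in sequentially. \<exists>z. norm (z - x (r j)) \<le> 0 \<and>
      f (x (Suc (r j))) \<le> f (z + t *\<^sub>R axis i 1)" for t
    using assms by (rule frequently_elim1) auto
qed

lemma gradient_zero_on_support_if_full:
  assumes full: "l0norm p = s" and i: "i \<in> I1 p"
  shows "g p $ i = 0"
proof (rule gradient_component_zero_if_frequently_optimal[OF eventually_frequently])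
  have "\<forall>\<^sub>F j in sequentially. I1 (x (r j)) = I1 p"
    using eventually_I1_subset[OF subseq_tendsto]
  proof eventually_elim
    case (elim j)
    then show ?case
      using l0norm_iterate_le[of "r j"] full by (intro card_seteq[symmetric]) (auto simp: l0norm_eq_card_I1)
  qed
  then show "\<forall>\<^sub>F j in sequentially. \<forall>t. f (x (Suc (r j))) \<le> f (x (r j) + t *\<^sub>R axis i 1)"
  proof eventually_elim
    case (elim j)
    then have "l0norm (x (r j)) = s" "i \<in> I1 (x (r j))" using full i by (simp_all add: l0norm_eq_card_I1)
    then show ?case using pss_step_full_along_support[OF attained steps] by blast
  qed
qed auto

lemma gradient_zero_if_frequently_sparse:
  assumes "\<exists>\<^sub>F j in sequentially. l0norm (x (r j)) < s"
  shows "g p = 0"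
proof -
  have "g p $ i = 0" for i
    using assms
    by (intro gradient_component_zero_if_frequently_optimal, elim frequently_elim1)
      (use pss_step_sparse[OF attained steps] in blast)
  then show ?thesis by (simp add: vec_eq_iff)
qed

text \<open>As x^(r j) is full and p is sparse, x^(r j) has a nonzero entry off the support of p; the
  dropped entry is no larger, hence bounded by the l1-mass of x^(r j) off the support of p, which
  tends to 0.\<close>
lemma frequent_swap_index:
  assumes sparse: "l0norm p < s" and full: "\<forall>\<^sub>F j in sequentially. l0norm (x (r j)) = s"
  obtains c where "\<exists>\<^sub>F j in sequentially. c \<in> I0 (x (r j)) \<and>
      (\<forall>i\<in>I0 (x (r j)). \<bar>g (x (r j)) $ i\<bar> \<le> \<bar>g (x (r j)) $ c\<bar>) \<and>
      (\<forall>t. \<exists>z. norm (z - x (r j)) \<le> (\<Sum>i\<in>I0 p. \<bar>x (r j) $ i\<bar>) \<and>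
               f (x (Suc (r j))) \<le> f (z + t *\<^sub>R axis c 1))"
proof -
  have "\<forall>\<^sub>F j in sequentially. \<exists>c\<in>UNIV. c \<in> I0 (x (r j)) \<and>
      (\<forall>i\<in>I0 (x (r j)). \<bar>g (x (r j)) $ i\<bar> \<le> \<bar>g (x (r j)) $ c\<bar>) \<and>
      (\<forall>t. \<exists>z. norm (z - x (r j)) \<le> (\<Sum>i\<in>I0 p. \<bar>x (r j) $ i\<bar>) \<and>
               f (x (Suc (r j))) \<le> f (z + t *\<^sub>R axis c 1))"
    using full
  proof eventually_elim
    case (elim j)
    obtain m c where m: "m \<in> I1 (x (r j))" "\<forall>i\<in>I1 (x (r j)). \<bar>x (r j) $ m\<bar> \<le> \<bar>x (r j) $ i\<bar>"
      and c: "c \<in> I0 (x (r j))" "\<forall>i\<in>I0 (x (r j)). \<bar>g (x (r j)) $ i\<bar> \<le> \<bar>g (x (r j)) $ c\<bar>"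
      and swap: "\<forall>t. f (x (Suc (r j))) \<le>
        f (x (r j) - (x (r j) $ m) *\<^sub>R axis m 1 + t *\<^sub>R axis c 1)"
      and "\<forall>i\<in>I1 (x (r j)). \<forall>u. f (x (Suc (r j))) \<le> f (x (r j) + u *\<^sub>R axis i 1)"
      and "f (x (Suc (r j))) \<le> f (x (r j))" and "l0norm (x (Suc (r j))) \<le> s"
      by (rule pss_step_full[OF attained steps elim])
    have "\<not> I1 (x (r j)) \<subseteq> I1 p"
      using elim sparse card_mono[of "I1 p" "I1 (x (r j))"] by (auto simp: l0norm_eq_card_I1)
    then obtain i0 where i0: "i0 \<in> I1 (x (r j))" "i0 \<in> I0 p" by (auto simp: I1_def I0_def)
    have "norm ((x (r j) - (x (r j) $ m) *\<^sub>R axis m 1) - x (r j)) = \<bar>x (r j) $ m\<bar>"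
      by (simp add: norm_axis_1)
    also have "\<dots> \<le> \<bar>x (r j) $ i0\<bar>" using m i0 by blast
    also have "\<dots> \<le> (\<Sum>i\<in>I0 p. \<bar>x (r j) $ i\<bar>)" using i0 by (intro member_le_sum) auto
    finally show ?case using c swap by blast
  qed
  from frequently_bex_finite[OF finite eventually_frequently[OF sequentially_bot this]]
  show ?thesis using that by blast
qed

lemma gradient_zero_if_sparse:
  assumes sparse: "l0norm p < s"
  shows "g p = 0"
proof (cases "\<exists>\<^sub>F j in sequentially. l0norm (x (r j)) < s")
  case True
  then show ?thesis by (rule gradient_zero_if_frequently_sparse)
next
  case False
  then have full: "\<forall>\<^sub>F j in sequentially. l0norm (x (r j)) = s"
    unfolding not_frequently by eventually_elim (use l0norm_iterate_le in \<open>auto simp: le_less\<close>)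
  obtain c where c: "\<exists>\<^sub>F j in sequentially. c \<in> I0 (x (r j)) \<and>
      (\<forall>i\<in>I0 (x (r j)). \<bar>g (x (r j)) $ i\<bar> \<le> \<bar>g (x (r j)) $ c\<bar>) \<and>
      (\<forall>t. \<exists>z. norm (z - x (r j)) \<le> (\<Sum>i\<in>I0 p. \<bar>x (r j) $ i\<bar>) \<and>
               f (x (Suc (r j))) \<le> f (z + t *\<^sub>R axis c 1))"
    using frequent_swap_index[OF sparse full] by blast
  have "(\<lambda>j. \<Sum>i\<in>I0 p. \<bar>x (r j) $ i\<bar>) \<longlonglongrightarrow> (\<Sum>i\<in>I0 p. \<bar>p $ i\<bar>)"
    by (intro tendsto_sum tendsto_rabs tendsto_vec_nth subseq_tendsto)
  then have "(\<lambda>j. \<Sum>i\<in>I0 p. \<bar>x (r j) $ i\<bar>) \<longlonglongrightarrow> 0" by (simp add: I0_def)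
  then have gc: "g p $ c = 0"
    by (rule gradient_component_zero_if_frequently_near) (use c in \<open>auto elim: frequently_elim1\<close>)
  have "g p $ i = 0" for i
  proof (cases "\<exists>\<^sub>F j in sequentially. i \<in> I1 (x (r j))")
    case True
    have "\<forall>\<^sub>F j in sequentially.
        i \<in> I1 (x (r j)) \<longrightarrow> (\<forall>t. f (x (Suc (r j))) \<le> f (x (r j) + t *\<^sub>R axis i 1))"
      using full by eventually_elim (use pss_step_full_along_support[OF attained steps] in blast)
    then show ?thesis
      by (intro gradient_component_zero_if_frequently_optimal) (rule frequently_mp[OF _ True])
  next
    case False
    then have off_support: "\<forall>\<^sub>F j in sequentially. i \<in> I0 (x (r j))"
      unfolding not_frequently by eventually_elim (auto simp: I1_def I0_def)
    have "\<exists>\<^sub>F j in sequentially. \<bar>g (x (r j)) $ i\<bar> \<le> \<bar>g (x (r j)) $ c\<bar>"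
      using frequently_eventually_conj[OF c off_support] by (rule frequently_elim1) auto
    then have "\<bar>g p $ i\<bar> \<le> \<bar>g p $ c\<bar>"
      by (rule tendsto_le_frequently[rotated 2]) (intro tendsto_rabs tendsto_vec_nth g_subseq_tendsto)+
    then show ?thesis using gc by simp
  qed
  then show ?thesis by (simp add: vec_eq_iff)
qed

end

text \<open>Neither the lower bound on f nor the bounds 0 < s < n are needed: the monotone values f(x^k)
  converge along the whole sequence once they do along a subsequence, and the existence of each
  step is part of the hypothesis on the iterates.\<close>
theorem lemma3p3:
  fixes f :: "real^'n \<Rightarrow> real" and g :: "real^'n \<Rightarrow> real^'n"
    and s :: nat and x :: "nat \<Rightarrow> real^'n" and p :: "real^'n"
  assumes grad: "\<And>y. (f has_derivative (\<lambda>h. g y \<bullet> h)) (at y)"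
    and C1: "continuous_on UNIV g"
    and bdd: "bdd_below (range f)"
    and s_pos: "0 < s" and s_less: "s < CARD('n)"
    and attained: "\<And>y i. \<exists>t. is_line_argmin f y i t"
    and init: "x 0 \<in> Cs s"
    and steps: "\<And>k. pss_step f g s (x k) (x (Suc k))"
    and accum: "\<exists>r. strict_mono r \<and> (x \<circ> r) \<longlonglongrightarrow> p"
  shows "BF_vector g s p"
proof -
  obtain r where "strict_mono r" "(x \<circ> r) \<longlonglongrightarrow> p" using accum by blast
  then interpret pss_accumulation f g s x r p
    using grad C1 attained init steps by unfold_locales
  show ?thesis
    unfolding BF_vector_def
    using limit_in_Cs gradient_zero_if_sparse gradient_zero_on_support_if_full by blast
qed

end
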